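(* Let $n$ be a positive integer, $G=\mathbb{Z}\times\mathbb{Z}_n=\langle z\rangle\times\langle a\rangle$, and let $\mathcal{S}$ be a Schur ring over $G$ such that $\mathbb{Z}^{(n)}=\langle z^n\rangle$ is an $\mathcal{S}$-subgroup. Let $C$ be an $\mathcal{S}$-subset. Then $C$ is an $\mathcal{S}$-class if and only if $C^{(k)}$ is an $\mathcal{S}$-class for all integers $k$ with $\gcd(k,n)=1$.
   Context: $F$ is a field of characteristic $0$; $\mathbb{Z}=\langle z\rangle$ is infinite cyclic and $\mathbb{Z}_n=\langle a\rangle$ is cyclic of order $n$, written multiplicatively. For finite $C\subseteq G$, $\overline{C}=\sum_{g\in C}g\in F[G]$ and $C^*=\{g^{-1}:g\in C\}$. A Schur ring over $G$ is a subspace $\mathcal{S}=\mathrm{Span}_F\{\overline{C}:C\in\mathcal{D}\}$ of $F[G]$, where $\mathcal{D}=\mathcal{D}(\mathcal{S})$ is a partition of $G$ into finite subsets with $\{1\}\in\mathcal{D}$, $C\in\mathcal{D}\Rightarrow C^*\in\mathcal{D}$, and each product $\overline{C}\,\overline{D}$ ($C,D\in\mathcal{D}$) a finite $F$-linear combination of the $\overline{E}$, $E\in\mathcal{D}$. Members of $\mathcal{D}(\mathcal{S})$ are $\mathcal{S}$-classes (primitive sets); an $\mathcal{S}$-subset is a union of $\mathcal{S}$-classes; an $\mathcal{S}$-subgroup is a subgroup which is an $\mathcal{S}$-subset. For a subset $C$ and integer $k$, $C^{(k)}=\{g^k:g\in C\}$. *)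

theory Defs
  imports Main
begin

text \<open>The group G = Z x Z_n = <z> x <a> is modelled on the carrier
  UNIV x {0..<n} inside int x int: the pair (i, j) stands for z^i a^j,
  with multiplication (i,j)(i',j') = (i+i', (j+j') mod n).\<close>

definition zzn_carrier :: "int \<Rightarrow> (int \<times> int) set" where
  "zzn_carrier n = UNIV \<times> {0..<n}"

definition zzn_mult :: "int \<Rightarrow> int \<times> int \<Rightarrow> int \<times> int \<Rightarrow> int \<times> int" where
  "zzn_mult n x y = (fst x + fst y, (snd x + snd y) mod n)"

definition zzn_one :: "int \<times> int" where
  "zzn_one = (0, 0)"

definition zzn_inv :: "int \<Rightarrow> int \<times> int \<Rightarrow> int \<times> int" where
  "zzn_inv n x = (- fst x, (- snd x) mod n)"

definition zzn_pow :: "int \<Rightarrow> int \<Rightarrow> int \<times> int \<Rightarrow> int \<times> int" where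
  "zzn_pow n k x = (k * fst x, (k * snd x) mod n)"

definition set_inv :: "int \<Rightarrow> (int \<times> int) set \<Rightarrow> (int \<times> int) set" where
  "set_inv n C = zzn_inv n ` C"

definition set_pow :: "int \<Rightarrow> int \<Rightarrow> (int \<times> int) set \<Rightarrow> (int \<times> int) set" where
  "set_pow n k C = zzn_pow n k ` C"

definition Zn_sub :: "int \<Rightarrow> (int \<times> int) set" where
  "Zn_sub n = {(n * m, 0) | m. True}"

text \<open>Coefficient of g in the product \<open>C\<close>-bar times \<open>D\<close>-bar in F[G] (C, D finite).\<close>
definition class_prod :: "int \<Rightarrow> (int \<times> int) set \<Rightarrow> (int \<times> int) set \<Rightarrow> int \<times> int \<Rightarrow> 'f::field" where
  "class_prod n C D g = of_nat (card {(c, d). c \<in> C \<and> d \<in> D \<and> zzn_mult n c d = g})"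

text \<open>An element of F[G] (given by its coefficient function on G) is a finite
  F-linear combination of the class sums of classes in \<open>\<D>\<close>.\<close>
definition in_span_classes :: "int \<Rightarrow> (int \<times> int) set set \<Rightarrow> (int \<times> int \<Rightarrow> 'f::field) \<Rightarrow> bool" where
  "in_span_classes n \<D> f \<longleftrightarrow>
     (\<exists>E c. finite E \<and> E \<subseteq> \<D> \<and>
        (\<forall>g \<in> zzn_carrier n. f g = (\<Sum>e\<in>E. c e * (if g \<in> e then 1 else 0))))"

text \<open>\<D> is the set of classes of a Schur ring over G = Z x Z_n with coefficients in F
  (the field F enters through the type 'f).\<close>
definition schur_partition :: "'f::field itself \<Rightarrow> int \<Rightarrow> (int \<times> int) set set \<Rightarrow> bool" where
  "schur_partition TYPE('f) n \<D> \<longleftrightarrow>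
     (\<forall>C\<in>\<D>. C \<noteq> {} \<and> finite C \<and> C \<subseteq> zzn_carrier n) \<and>
     (\<forall>C\<in>\<D>. \<forall>D\<in>\<D>. C \<noteq> D \<longrightarrow> C \<inter> D = {}) \<and>
     \<Union>\<D> = zzn_carrier n \<and>
     {zzn_one} \<in> \<D> \<and>
     (\<forall>C\<in>\<D>. set_inv n C \<in> \<D>) \<and>
     (\<forall>C\<in>\<D>. \<forall>D\<in>\<D>. in_span_classes n \<D> (class_prod n C D :: int \<times> int \<Rightarrow> 'f))"

definition S_subset :: "(int \<times> int) set set \<Rightarrow> (int \<times> int) set \<Rightarrow> bool" where
  "S_subset \<D> C \<longleftrightarrow> (\<exists>T \<subseteq> \<D>. C = \<Union>T)"

end

theory Submission
  imports Defs "HOL-Computational_Algebra.Primes" "HOL-Number_Theory.Cong"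
begin

text \<open>
  Over a field of characteristic 0 the product axiom of a Schur ring says that the number of
  ways to write g = c d with c \<in> C, d \<in> D depends only on the class of g; the whole proof
  counts with these numbers.

  For a prime p the number of p-tuples from a class C with product g is constant on classes
  and, since the non-constant tuples fall into rotation orbits of size p, it is congruent
  mod p to the number of c \<in> C with c^p = g.  Hence, if x \<mapsto> x^p is injective on C, then
  C^(p) is an S-subset (Schur's multiplier argument), and by induction over prime factors so
  is X^(k) for every S-subset X and every k > 0 coprime to n (every k > 0 if X \<subseteq> Z^(n)).

  As Z^(n) is an S-subgroup, the class of h \<in> Z^(n) lies in {h, h^-1}: a class K in Z^(n)
  with K = K'^(s), K' \<in> {K, K^-1}, forces s = 1, because K and K' have the same sum of
  absolute first coordinates.

  Now let N \<equiv> 1 (mod n) exceed twice the absolute first coordinate of every element of the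
  class C.  Each x = z^i a^j \<in> C equals x^N h with h = z^-(N-1)i \<in> Z^(n), so C lies in the
  S-subset E {h, h^-1}, E the class of x^N; and y = y'^N h^\<plusminus>1 with y, y' \<in> C forces
  y = y', so C^(N) = E.  Finally, for k > 0 coprime to n choose m \<equiv> k^-1 (mod n) so large
  that N = k m qualifies: the class of any element of the S-subset C^(k) has its m-th power
  inside, hence equal to, the class C^(N) = (C^(k))^(m), so it is all of C^(k).  Negative k
  follow by inversion.
\<close>

section \<open>Rotations of lists\<close>

lemma rotate_eq_rotate_iff: "rotate k xs = rotate k ys \<longleftrightarrow> xs = ys"
proof (induction k)
  case (Suc k) then show ?case by (simp only: rotate_Suc inj_eq[OF inj_rotate1])
qed simp

lemma rotate1_fixpoint_replicate:
  assumes "rotate1 xs = xs" shows "xs = replicate (length xs) (hd xs)"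
proof (cases "xs = []")
  case False
  then have "card (set xs) = Suc 0" using rotate1_fixpoint_card[OF assms] by simp
  then obtain x where "xs = replicate (length xs) x"
    by (metis card_set_1_iff_replicate)
  then show ?thesis using False by (metis hd_replicate length_0_conv)
qed simp

lemma rotate_fixpoint_coprime:
  assumes fixed: "rotate d xs = xs" and cop: "coprime d (length xs)"
  shows "rotate1 xs = xs"
proof (cases "length xs = 1")
  case False
  obtain m where m: "[d * m = 1] (mod length xs)"
    using cong_solve_coprime_nat[OF cop] by auto
  have "rotate (d * j) xs = xs" for j
  proof (induction j)
    case (Suc j) then show ?case by (metis fixed rotate_rotate mult_Suc_right)
  qed simp
  then have "rotate ((d * m) mod length xs) xs = xs" by (metis rotate_conv_mod)
  moreover have "(d * m) mod length xs = 1"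
    using m False unfolding cong_def by (cases "length xs = 0") simp_all
  ultimately show ?thesis by simp
qed (simp add: rotate1_length01)

lemma range_rotate:
  assumes "xs \<noteq> []" shows "range (\<lambda>k. rotate k xs) = (\<lambda>k. rotate k xs) ` {..<length xs}"
proof -
  have "rotate k xs \<in> (\<lambda>k. rotate k xs) ` {..<length xs}" for k
    using assms by (subst rotate_conv_mod) simp
  then show ?thesis by blast
qed

lemma inj_on_rotate_prime_length:
  assumes p: "prime (length xs)" and nonfixed: "rotate1 xs \<noteq> xs"
  shows "inj_on (\<lambda>k. rotate k xs) {..<length xs}"
proof (rule linorder_inj_onI')
  fix i j assume ij: "i \<in> {..<length xs}" "j \<in> {..<length xs}" "i < j"
  show "rotate i xs \<noteq> rotate j xs"
  proof
    assume eq: "rotate i xs = rotate j xs"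
    have "length xs - i + j = (j - i) + length xs" and "j - i < length xs" using ij by auto
    then have "(length xs - i + j) mod length xs = j - i" by (simp only: mod_add_self2 mod_less)
    then have "rotate (j - i) xs = rotate (length xs - i + j) xs"
      using rotate_conv_mod[of "length xs - i + j" xs] by (simp only:)
    also have "\<dots> = rotate (length xs - i) (rotate i xs)" by (simp add: eq rotate_rotate)
    also have "\<dots> = xs" using ij(1) by (simp add: rotate_rotate)
    finally have "rotate (j - i) xs = xs" .
    moreover have "coprime (j - i) (length xs)"
      using p ij prime_imp_coprime_nat[OF p, of "j - i"] nat_dvd_not_less[of "j - i" "length xs"]
      by (simp add: coprime_commute)
    ultimately have "rotate1 xs = xs" by (rule rotate_fixpoint_coprime)
    then show False using nonfixed by contradiction
  qed
qed

lemma prime_dvd_card_rotate1_nonfixed: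
  assumes p: "prime p" and fin: "finite A"
    and len: "\<And>xs. xs \<in> A \<Longrightarrow> length xs = p"
    and rot: "\<And>xs. xs \<in> A \<Longrightarrow> rotate1 xs \<in> A"
  shows "p dvd card {xs \<in> A. rotate1 xs \<noteq> xs}"
proof -
  define A' where "A' = {xs \<in> A. rotate1 xs \<noteq> xs}"
  define r where "r = {(xs, ys). xs \<in> A' \<and> ys \<in> range (\<lambda>k. rotate k xs)}"
  have rotate_A: "rotate k xs \<in> A" if "xs \<in> A" for xs k
  proof (induction k)
    case (Suc k) then show ?case by (simp only: rotate_Suc rot)
  qed (simp add: that)
  have rotate_A': "rotate k xs \<in> A'" if "xs \<in> A'" for xs k
    using that rotate_A rotate_eq_rotate_iff[of k "rotate1 xs" xs]
    by (simp add: A'_def rotate1_rotate_swap)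
  have "equiv A' r"
  proof (rule equivI)
    show "refl_on A' r"
      unfolding refl_on_def r_def by (auto intro: range_eqI[of _ _ 0])
    show "sym r"
    proof (rule symI)
      fix xs ys assume "(xs, ys) \<in> r"
      then obtain k where xs: "xs \<in> A'" and ys: "ys = rotate k xs"
        unfolding r_def by blast
      have "rotate (p * k - k) ys = rotate (p * k) xs"
        using prime_gt_0_nat[OF p] by (simp add: ys rotate_rotate)
      also have "\<dots> = xs" using xs len by (simp add: A'_def)
      finally have "xs \<in> range (\<lambda>k. rotate k ys)" by (intro range_eqI) (rule sym)
      then show "(ys, xs) \<in> r" using rotate_A'[OF xs] ys by (simp add: r_def)
    qed
    show "trans r"
      unfolding r_def by (rule transI) (auto simp: rotate_rotate)
    show "r \<subseteq> A' \<times> A'"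
      unfolding r_def using rotate_A' by auto
  qed
  then have "p dvd card A'"
  proof (rule equiv_imp_dvd_card[rotated])
    fix X assume "X \<in> A' // r"
    then obtain xs where xs: "xs \<in> A'" and X: "X = r `` {xs}"
      unfolding quotient_def by blast
    have "xs \<noteq> []" using xs len[of xs] prime_gt_0_nat[OF p] by (auto simp: A'_def)
    have "X = range (\<lambda>k. rotate k xs)" using xs by (auto simp: X r_def)
    also have "\<dots> = (\<lambda>k. rotate k xs) ` {..<p}"
      using range_rotate[OF \<open>xs \<noteq> []\<close>] len[of xs] xs by (simp add: A'_def)
    finally have "X = (\<lambda>k. rotate k xs) ` {..<p}" .
    moreover have "inj_on (\<lambda>k. rotate k xs) {..<p}"
      using inj_on_rotate_prime_length[of xs] p len[of xs] xs by (simp add: A'_def)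
    ultimately show "p dvd card X" by (simp add: card_image)
  qed (simp add: A'_def fin)
  then show ?thesis unfolding A'_def .
qed

section \<open>The group Z \<times> Z_n\<close>

lemma zzn_carrier_iff: "x \<in> zzn_carrier n \<longleftrightarrow> 0 \<le> snd x \<and> snd x < n"
  by (cases x) (simp add: zzn_carrier_def)

lemma zzn_mult_commute: "zzn_mult n x y = zzn_mult n y x"
  by (simp add: zzn_mult_def add.commute)

lemma zzn_mult_assoc: "zzn_mult n (zzn_mult n x y) w = zzn_mult n x (zzn_mult n y w)"
  by (simp add: zzn_mult_def mod_add_left_eq mod_add_right_eq add.assoc)

lemma zzn_mult_closed: "0 < n \<Longrightarrow> zzn_mult n x y \<in> zzn_carrier n"
  by (simp add: zzn_carrier_iff zzn_mult_def)

lemma zzn_one_closed: "0 < n \<Longrightarrow> zzn_one \<in> zzn_carrier n"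
  by (simp add: zzn_carrier_iff zzn_one_def)

lemma zzn_pow_closed: "0 < n \<Longrightarrow> zzn_pow n k x \<in> zzn_carrier n"
  by (simp add: zzn_carrier_iff zzn_pow_def)

lemma zzn_pow_pow: "zzn_pow n a (zzn_pow n b x) = zzn_pow n (a * b) x"
  by (simp add: zzn_pow_def mod_mult_right_eq mult.assoc)

lemma zzn_pow_1: "x \<in> zzn_carrier n \<Longrightarrow> zzn_pow n 1 x = x"
  by (cases x) (simp add: zzn_pow_def zzn_carrier_iff)

lemma zzn_pow_uminus: "zzn_pow n (- k) x = zzn_inv n (zzn_pow n k x)"
  by (simp add: zzn_pow_def zzn_inv_def mod_minus_eq)

lemma zzn_pow_cong_1:
  assumes "[N = 1] (mod n)" and "x \<in> zzn_carrier n"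
  shows "zzn_pow n N x = (N * fst x, snd x)"
proof -
  have "(N * snd x) mod n = (1 * snd x) mod n"
    using assms(1) by (metis cong_def mod_mult_left_eq)
  then show ?thesis using assms(2) by (simp add: zzn_pow_def zzn_carrier_iff)
qed

lemma inj_on_zzn_pow:
  assumes "k \<noteq> 0" and "coprime k n"
  shows "inj_on (zzn_pow n k) (zzn_carrier n)"
proof (rule inj_onI)
  fix x y assume x: "x \<in> zzn_carrier n" and y: "y \<in> zzn_carrier n"
    and eq: "zzn_pow n k x = zzn_pow n k y"
  then have "fst x = fst y" using assms(1) by (simp add: zzn_pow_def)
  moreover have "[k * snd x = k * snd y] (mod n)"
    using eq by (simp add: zzn_pow_def cong_def)
  then have "[snd x = snd y] (mod n)" using cong_mult_lcancel[OF assms(2)] by blast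
  then have "snd x = snd y" using x y by (simp add: cong_def zzn_carrier_iff)
  ultimately show "x = y" by (simp add: prod_eq_iff)
qed

lemma inj_on_zzn_inv: "inj_on (zzn_inv n) (zzn_carrier n)"
proof (rule inj_onI)
  fix x y assume x: "x \<in> zzn_carrier n" and y: "y \<in> zzn_carrier n"
    and eq: "zzn_inv n x = zzn_inv n y"
  then have "[- snd x = - snd y] (mod n)" by (simp add: zzn_inv_def cong_def)
  then have "[snd x = snd y] (mod n)" by (simp only: cong_minus_minus_iff)
  then have "snd x = snd y" using x y by (simp add: cong_def zzn_carrier_iff)
  then show "x = y" using eq by (simp add: zzn_inv_def prod_eq_iff)
qed

lemma Zn_sub_carrier: "0 < n \<Longrightarrow> Zn_sub n \<subseteq> zzn_carrier n"
  by (auto simp: Zn_sub_def zzn_carrier_iff)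

lemma zzn_inv_Zn_sub: "h \<in> Zn_sub n \<Longrightarrow> zzn_inv n h \<in> Zn_sub n"
  by (auto simp: Zn_sub_def zzn_inv_def intro: exI[of _ "- m" for m])

lemma inj_on_zzn_pow_Zn_sub: "k \<noteq> 0 \<Longrightarrow> inj_on (zzn_pow n k) (Zn_sub n)"
  by (auto simp: inj_on_def Zn_sub_def zzn_pow_def)

definition zzn_prod :: "int \<Rightarrow> (int \<times> int) list \<Rightarrow> int \<times> int" where
  "zzn_prod n xs = foldr (zzn_mult n) xs zzn_one"

lemma zzn_prod_Nil [simp]: "zzn_prod n [] = zzn_one"
  and zzn_prod_Cons [simp]: "zzn_prod n (x # xs) = zzn_mult n x (zzn_prod n xs)"
  by (simp_all add: zzn_prod_def)

lemma zzn_prod_closed: "0 < n \<Longrightarrow> zzn_prod n xs \<in> zzn_carrier n"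
  by (cases xs) (simp_all add: zzn_one_closed zzn_mult_closed)

lemma zzn_mult_one_prod: "zzn_mult n zzn_one (zzn_prod n xs) = zzn_prod n xs"
  by (cases xs) (simp_all add: zzn_mult_def zzn_one_def)

lemma zzn_prod_append: "zzn_prod n (xs @ ys) = zzn_mult n (zzn_prod n xs) (zzn_prod n ys)"
  by (induction xs) (simp_all add: zzn_mult_assoc zzn_mult_one_prod)

lemma zzn_prod_rotate1: "zzn_prod n (rotate1 xs) = zzn_prod n xs"
proof (cases xs)
  case (Cons x ys)
  have "zzn_mult n y (zzn_mult n x zzn_one) = zzn_mult n y x" for y
    by (simp add: zzn_mult_def zzn_one_def mod_add_right_eq)
  then show ?thesis using Cons by (simp add: zzn_prod_append zzn_mult_commute)
qed simp

lemma zzn_prod_replicate: "zzn_prod n (replicate m x) = zzn_pow n (int m) x"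
  by (induction m) (simp_all add: zzn_one_def zzn_pow_def zzn_mult_def mod_add_right_eq algebra_simps)

section \<open>Counting factorisations\<close>

definition factorizations ::
    "int \<Rightarrow> (int \<times> int) set \<Rightarrow> (int \<times> int) set \<Rightarrow> int \<times> int \<Rightarrow> ((int \<times> int) \<times> (int \<times> int)) set" where
  "factorizations n A B g = {(a, b). a \<in> A \<and> b \<in> B \<and> zzn_mult n a b = g}"

lemma finite_factorizations: "finite A \<Longrightarrow> finite B \<Longrightarrow> finite (factorizations n A B g)"
  by (rule finite_subset[of _ "A \<times> B"]) (auto simp: factorizations_def)

lemma card_factorizations_eq_sum:
  assumes "finite A" and "finite B"
  shows "card (factorizations n A B g) = (\<Sum>b\<in>B. card {a \<in> A. zzn_mult n a b = g})"
proof -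
  have "factorizations n A B g = (\<lambda>(b, a). (a, b)) ` (SIGMA b:B. {a \<in> A. zzn_mult n a b = g})"
    by (auto simp: factorizations_def)
  moreover have "inj_on (\<lambda>(b, a). (a, b)) (SIGMA b:B. {a \<in> A. zzn_mult n a b = g})"
    by (auto simp: inj_on_def)
  ultimately show ?thesis using assms by (simp add: card_image)
qed

definition prod_tuples :: "int \<Rightarrow> (int \<times> int) set \<Rightarrow> nat \<Rightarrow> int \<times> int \<Rightarrow> (int \<times> int) list set" where
  "prod_tuples n C k g = {xs. length xs = k \<and> set xs \<subseteq> C \<and> zzn_prod n xs = g}"

lemma finite_prod_tuples: "finite C \<Longrightarrow> finite (prod_tuples n C k g)"
  by (rule finite_subset[of _ "{xs. set xs \<subseteq> C \<and> length xs = k}"])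
     (auto simp: prod_tuples_def finite_lists_length_eq)

lemma finite_prod_tuples_support:
  assumes "finite C" shows "finite {y. card (prod_tuples n C k y) \<noteq> 0}"
proof (rule finite_subset)
  show "{y. card (prod_tuples n C k y) \<noteq> 0} \<subseteq> zzn_prod n ` {xs. set xs \<subseteq> C \<and> length xs = k}"
  proof
    fix y assume "y \<in> {y. card (prod_tuples n C k y) \<noteq> 0}"
    then obtain xs where "xs \<in> prod_tuples n C k y" by fastforce
    then show "y \<in> zzn_prod n ` {xs. set xs \<subseteq> C \<and> length xs = k}"
      by (auto simp: prod_tuples_def)
  qed
  show "finite (zzn_prod n ` {xs. set xs \<subseteq> C \<and> length xs = k})"
    by (intro finite_imageI finite_lists_length_eq assms)
qed

lemma prod_tuples_support_carrier: "0 < n \<Longrightarrow> card (prod_tuples n C k y) \<noteq> 0 \<Longrightarrow> y \<in> zzn_carrier n"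
  by (auto simp: prod_tuples_def card_eq_0_iff zzn_prod_closed)

lemma card_prod_tuples_Suc:
  assumes C: "finite C"
  shows "card (prod_tuples n C (Suc k) g) =
    (\<Sum>y\<in>{y. card (prod_tuples n C k y) \<noteq> 0}.
       card (prod_tuples n C k y) * card {c \<in> C. zzn_mult n c y = g})"
proof -
  define Z where "Z = {y. card (prod_tuples n C k y) \<noteq> 0}"
  define S where "S = (SIGMA y:Z. {c \<in> C. zzn_mult n c y = g} \<times> prod_tuples n C k y)"
  define cons where "cons = (\<lambda>(y :: int \<times> int, c :: int \<times> int, ys). c # ys)"
  have "prod_tuples n C (Suc k) g = cons ` S"
  proof
    show "prod_tuples n C (Suc k) g \<subseteq> cons ` S"
    proof
      fix xs assume xs: "xs \<in> prod_tuples n C (Suc k) g"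
      then obtain c ys where "xs = c # ys" by (cases xs) (auto simp: prod_tuples_def)
      moreover have "(zzn_prod n ys, c, ys) \<in> S"
        using xs \<open>xs = c # ys\<close> finite_prod_tuples[OF C]
        by (auto simp: S_def Z_def prod_tuples_def card_eq_0_iff)
      ultimately show "xs \<in> cons ` S" unfolding cons_def by force
    qed
    show "cons ` S \<subseteq> prod_tuples n C (Suc k) g"
      by (auto simp: cons_def S_def prod_tuples_def)
  qed
  moreover have "inj_on cons S"
    by (auto simp: inj_on_def cons_def S_def prod_tuples_def)
  ultimately have "card (prod_tuples n C (Suc k) g) = card S" by (simp add: card_image)
  also have "\<dots> = (\<Sum>y\<in>Z. card {c \<in> C. zzn_mult n c y = g} * card (prod_tuples n C k y))"
    unfolding S_def using finite_prod_tuples_support[OF C] finite_prod_tuples[OF C] C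
    by (simp add: Z_def card_SigmaI card_cartesian_product)
  finally show ?thesis by (simp add: Z_def mult.commute)
qed

lemma prod_tuples_rotate1_fixed:
  assumes "0 < p"
  shows "{xs \<in> prod_tuples n C p g. rotate1 xs = xs} =
    (\<lambda>c. replicate p c) ` {c \<in> C. zzn_pow n (int p) c = g}"
proof
  show "{xs \<in> prod_tuples n C p g. rotate1 xs = xs} \<subseteq> (\<lambda>c. replicate p c) ` {c \<in> C. zzn_pow n (int p) c = g}"
  proof
    fix xs assume xs: "xs \<in> {xs \<in> prod_tuples n C p g. rotate1 xs = xs}"
    then have rep: "xs = replicate p (hd xs)"
      using rotate1_fixpoint_replicate by (fastforce simp: prod_tuples_def)
    have "hd xs \<in> C" using xs assms by (auto simp: prod_tuples_def hd_in_set)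
    moreover have "zzn_pow n (int p) (hd xs) = g"
      using xs zzn_prod_replicate[of n p "hd xs"] rep by (simp add: prod_tuples_def)
    ultimately show "xs \<in> (\<lambda>c. replicate p c) ` {c \<in> C. zzn_pow n (int p) c = g}"
      using rep by blast
  qed
  show "(\<lambda>c. replicate p c) ` {c \<in> C. zzn_pow n (int p) c = g} \<subseteq> {xs \<in> prod_tuples n C p g. rotate1 xs = xs}"
    using assms by (auto simp: prod_tuples_def zzn_prod_replicate)
qed

lemma card_prod_tuples_prime_mod:
  assumes p: "prime p" and C: "finite C"
  shows "card (prod_tuples n C p g) mod p = card {c \<in> C. zzn_pow n (int p) c = g} mod p"
proof -
  define A where "A = prod_tuples n C p g"
  have "finite A" unfolding A_def using C by (rule finite_prod_tuples)
  have "rotate1 xs \<in> A" if "xs \<in> A" for xs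
    using that by (simp add: A_def prod_tuples_def zzn_prod_rotate1)
  then obtain q where "card {xs \<in> A. rotate1 xs \<noteq> xs} = p * q"
    using prime_dvd_card_rotate1_nonfixed[OF p \<open>finite A\<close>] by (auto simp: A_def prod_tuples_def elim!: dvdE)
  moreover have "card {xs \<in> A. rotate1 xs = xs} = card {c \<in> C. zzn_pow n (int p) c = g}"
    using prod_tuples_rotate1_fixed[OF prime_gt_0_nat[OF p]] prime_gt_0_nat[OF p]
    by (simp add: A_def card_image inj_on_def)
  moreover have "card A = card ({xs \<in> A. rotate1 xs \<noteq> xs} \<union> {xs \<in> A. rotate1 xs = xs})"
    by (rule arg_cong[where f = card]) blast
  then have "card A = card {xs \<in> A. rotate1 xs \<noteq> xs} + card {xs \<in> A. rotate1 xs = xs}"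
    using \<open>finite A\<close> by (simp add: card_Un_disjoint disjoint_iff)
  ultimately show ?thesis unfolding A_def by simp
qed

section \<open>Schur rings over Z \<times> Z_n\<close>

lemma schur_partition_card_factorizations_eq:
  assumes sp: "schur_partition TYPE('f::field_char_0) n \<D>"
    and C1: "C1 \<in> \<D>" and C2: "C2 \<in> \<D>" and K: "K \<in> \<D>" and x: "x \<in> K" and y: "y \<in> K"
  shows "card (factorizations n C1 C2 x) = card (factorizations n C1 C2 y)"
proof -
  obtain E c where E: "E \<subseteq> \<D>" "finite E"
    and span: "\<forall>g \<in> zzn_carrier n. (class_prod n C1 C2 g :: 'f) = (\<Sum>e\<in>E. c e * (if g \<in> e then 1 else 0))"
    using sp C1 C2 unfolding schur_partition_def in_span_classes_def by blast
  have coeff: "(class_prod n C1 C2 g :: 'f) = (if K \<in> E then c K else 0)" if g: "g \<in> K" for g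
  proof -
    have "g \<in> zzn_carrier n" using sp K g unfolding schur_partition_def by blast
    moreover have "g \<in> e \<longleftrightarrow> e = K" if "e \<in> E" for e
      using sp that E K g unfolding schur_partition_def by blast
    ultimately show ?thesis
      using span E(2) by (simp add: if_distrib[of "(*) _"] sum.delta cong: if_cong)
  qed
  have "(of_nat (card (factorizations n C1 C2 x)) :: 'f) = of_nat (card (factorizations n C1 C2 y))"
    using coeff[OF x] coeff[OF y] by (simp add: class_prod_def factorizations_def)
  then show ?thesis by (rule of_nat_eq_iff[THEN iffD1])
qed

locale zzn_schur =
  fixes n :: int and \<D> :: "(int \<times> int) set set"
  assumes n_pos: "0 < n"
    and class_nonempty: "C \<in> \<D> \<Longrightarrow> C \<noteq> {}"
    and class_finite: "C \<in> \<D> \<Longrightarrow> finite C"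
    and classes_disjoint: "C \<in> \<D> \<Longrightarrow> C' \<in> \<D> \<Longrightarrow> C \<noteq> C' \<Longrightarrow> C \<inter> C' = {}"
    and classes_cover: "\<Union>\<D> = zzn_carrier n"
    and one_class: "{zzn_one} \<in> \<D>"
    and set_inv_class: "C \<in> \<D> \<Longrightarrow> set_inv n C \<in> \<D>"
    and card_factorizations_eq:
      "C1 \<in> \<D> \<Longrightarrow> C2 \<in> \<D> \<Longrightarrow> K \<in> \<D> \<Longrightarrow> x \<in> K \<Longrightarrow> y \<in> K \<Longrightarrow>
       card (factorizations n C1 C2 x) = card (factorizations n C1 C2 y)"

lemma schur_partition_imp_zzn_schur:
  assumes "0 < n" and sp: "schur_partition TYPE('f::field_char_0) n \<D>"
  shows "zzn_schur n \<D>"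
proof
  show "\<And>C1 C2 K x y. C1 \<in> \<D> \<Longrightarrow> C2 \<in> \<D> \<Longrightarrow> K \<in> \<D> \<Longrightarrow> x \<in> K \<Longrightarrow> y \<in> K \<Longrightarrow>
      card (factorizations n C1 C2 x) = card (factorizations n C1 C2 y)"
    by (rule schur_partition_card_factorizations_eq[OF sp])
qed (use assms in \<open>auto simp: schur_partition_def\<close>)

context zzn_schur
begin

abbreviation G where "G \<equiv> zzn_carrier n"

abbreviation mult (infixl "\<cdot>" 70) where "x \<cdot> y \<equiv> zzn_mult n x y"

abbreviation pow where "pow k x \<equiv> zzn_pow n k x"

lemma class_subset_carrier: "C \<in> \<D> \<Longrightarrow> C \<subseteq> G"
  using classes_cover by blast

definition class_of :: "int \<times> int \<Rightarrow> (int \<times> int) set" where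
  "class_of x = (THE C. C \<in> \<D> \<and> x \<in> C)"

lemma class_of_eq:
  assumes "C \<in> \<D>" and "x \<in> C" shows "class_of x = C"
  unfolding class_of_def
proof (rule the_equality)
  show "C' = C" if "C' \<in> \<D> \<and> x \<in> C'" for C'
    using that assms classes_disjoint[of C' C] by blast
qed (use assms in simp)

lemma class_of_class: "x \<in> G \<Longrightarrow> class_of x \<in> \<D>"
  and mem_class_of: "x \<in> G \<Longrightarrow> x \<in> class_of x"
  using classes_cover class_of_eq by blast+

lemma class_of_one: "class_of zzn_one = {zzn_one}"
  using class_of_eq one_class by blast

lemma class_of_zzn_inv: "x \<in> G \<Longrightarrow> class_of (zzn_inv n x) = set_inv n (class_of x)"
  using class_of_eq set_inv_class class_of_class mem_class_of by (simp add: set_inv_def)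

lemma S_subset_iff: "S_subset \<D> X \<longleftrightarrow> X \<subseteq> G \<and> (\<forall>x\<in>X. class_of x \<subseteq> X)"
proof
  assume "S_subset \<D> X"
  then obtain T where "T \<subseteq> \<D>" "X = \<Union>T" unfolding S_subset_def by blast
  then show "X \<subseteq> G \<and> (\<forall>x\<in>X. class_of x \<subseteq> X)"
    using class_subset_carrier class_of_eq by blast
next
  assume "X \<subseteq> G \<and> (\<forall>x\<in>X. class_of x \<subseteq> X)"
  then have "X = \<Union>{class_of x | x. x \<in> X}" using mem_class_of by blast
  moreover have "{class_of x | x. x \<in> X} \<subseteq> \<D>" using \<open>X \<subseteq> G \<and> _\<close> class_of_class by blast
  ultimately show "S_subset \<D> X" unfolding S_subset_def by blast
qed

lemma S_subsetD: "S_subset \<D> X \<Longrightarrow> x \<in> X \<Longrightarrow> y \<in> class_of x \<Longrightarrow> y \<in> X"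
  by (auto simp: S_subset_iff)

lemma S_subset_carrier: "S_subset \<D> X \<Longrightarrow> X \<subseteq> G"
  by (simp add: S_subset_iff)

lemma S_subset_class: "C \<in> \<D> \<Longrightarrow> S_subset \<D> C"
  unfolding S_subset_def by (intro exI[of _ "{C}"]) simp

lemma S_subset_Union: "(\<And>X. X \<in> \<X> \<Longrightarrow> S_subset \<D> X) \<Longrightarrow> S_subset \<D> (\<Union>\<X>)"
  by (fastforce simp: S_subset_iff)

lemma S_subset_eq_Union_classes:
  assumes "S_subset \<D> X" shows "X = \<Union>{C \<in> \<D>. C \<subseteq> X}"
proof
  show "X \<subseteq> \<Union>{C \<in> \<D>. C \<subseteq> X}"
  proof
    fix x assume x: "x \<in> X"
    then have "x \<in> G" and "class_of x \<subseteq> X" using assms by (auto simp: S_subset_iff)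
    then show "x \<in> \<Union>{C \<in> \<D>. C \<subseteq> X}" using class_of_class mem_class_of by blast
  qed
qed blast

lemma S_subset_subset_class_eq:
  assumes "S_subset \<D> X" and "X \<noteq> {}" and "C \<in> \<D>" and "X \<subseteq> C"
  shows "X = C"
proof -
  obtain x where "x \<in> X" using assms(2) by blast
  then have "class_of x = C" using assms(3,4) class_of_eq by blast
  then show ?thesis using assms(1,4) \<open>x \<in> X\<close> by (auto simp: S_subset_iff)
qed

definition set_mult :: "(int \<times> int) set \<Rightarrow> (int \<times> int) set \<Rightarrow> (int \<times> int) set" where
  "set_mult A B = {a \<cdot> b | a b. a \<in> A \<and> b \<in> B}"

lemma S_subset_set_mult:
  assumes C1: "C1 \<in> \<D>" and C2: "C2 \<in> \<D>"
  shows "S_subset \<D> (set_mult C1 C2)"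
  unfolding S_subset_iff
proof (intro conjI ballI subsetI)
  show "x \<in> G" if "x \<in> set_mult C1 C2" for x
    using that n_pos zzn_mult_closed by (auto simp: set_mult_def)
  fix x y assume x: "x \<in> set_mult C1 C2" and y: "y \<in> class_of x"
  have "x \<in> G" using x n_pos zzn_mult_closed by (auto simp: set_mult_def)
  have fin: "finite (factorizations n C1 C2 g)" for g
    using C1 C2 class_finite finite_factorizations by blast
  have "factorizations n C1 C2 x \<noteq> {}"
    using x by (auto simp: set_mult_def factorizations_def)
  moreover have "card (factorizations n C1 C2 x) = card (factorizations n C1 C2 y)"
    using card_factorizations_eq[OF C1 C2 class_of_class] \<open>x \<in> G\<close> mem_class_of y by blast
  ultimately have "factorizations n C1 C2 y \<noteq> {}" using fin by (metis card_0_eq)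
  then show "y \<in> set_mult C1 C2" by (auto simp: set_mult_def factorizations_def)
qed

lemma convolution_class_invariant:
  fixes f :: "int \<times> int \<Rightarrow> nat"
  assumes C: "C \<in> \<D>"
    and supp: "\<And>y. f y \<noteq> 0 \<Longrightarrow> y \<in> G"
    and inv: "\<And>x y. x \<in> G \<Longrightarrow> y \<in> class_of x \<Longrightarrow> f y = f x"
    and g: "g \<in> G" and g': "g' \<in> class_of g"
  shows "(\<Sum>y\<in>{y. f y \<noteq> 0}. f y * card {c \<in> C. c \<cdot> y = g})
       = (\<Sum>y\<in>{y. f y \<noteq> 0}. f y * card {c \<in> C. c \<cdot> y = g'})"
proof -
  define Z where "Z = {y. f y \<noteq> 0}"
  define F where "F = {K \<in> \<D>. K \<subseteq> Z}"
  have "S_subset \<D> Z"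
    unfolding S_subset_iff
  proof (intro conjI ballI subsetI)
    show "y \<in> G" if "y \<in> Z" for y using that supp by (simp add: Z_def)
    show "y \<in> Z" if "x \<in> Z" and "y \<in> class_of x" for x y
      using that supp[of x] inv[of x y] by (simp add: Z_def)
  qed
  then have Z: "Z = \<Union>F" unfolding F_def by (rule S_subset_eq_Union_classes)
  have F_finite: "\<forall>K\<in>F. finite K" and F_disjoint: "\<forall>A\<in>F. \<forall>B\<in>F. A \<noteq> B \<longrightarrow> A \<inter> B = {}"
    unfolding F_def using class_finite classes_disjoint by blast+
  have "(\<Sum>y\<in>K. f y * card {c \<in> C. c \<cdot> y = g}) = (\<Sum>y\<in>K. f y * card {c \<in> C. c \<cdot> y = g'})"
    if K: "K \<in> \<D>" for K
  proof -
    obtain y0 where y0: "y0 \<in> K" using class_nonempty[OF K] by blast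
    have "f y = f y0" if "y \<in> K" for y
      using inv[of y0 y] class_of_eq[OF K] y0 that class_subset_carrier[OF K] by blast
    then have "(\<Sum>y\<in>K. f y * card {c \<in> C. c \<cdot> y = h}) = f y0 * card (factorizations n C K h)" for h
      using card_factorizations_eq_sum[OF class_finite[OF C] class_finite[OF K]]
      by (simp add: sum_distrib_left)
    moreover have "card (factorizations n C K g) = card (factorizations n C K g')"
      using card_factorizations_eq[OF C K class_of_class[OF g]] mem_class_of[OF g] g' by blast
    ultimately show ?thesis by simp
  qed
  moreover have "(\<Sum>y\<in>Z. f y * card {c \<in> C. c \<cdot> y = h}) =
      (\<Sum>K\<in>F. \<Sum>y\<in>K. f y * card {c \<in> C. c \<cdot> y = h})" for h
    unfolding Z by (simp add: sum.Union_disjoint[OF F_finite F_disjoint])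
  ultimately show ?thesis
    unfolding Z_def[symmetric] by (auto simp: F_def intro!: sum.cong)
qed

lemma card_prod_tuples_class_invariant:
  assumes C: "C \<in> \<D>"
  shows "x \<in> G \<Longrightarrow> y \<in> class_of x \<Longrightarrow> card (prod_tuples n C k y) = card (prod_tuples n C k x)"
proof (induction k arbitrary: x y)
  case 0
  have "y = zzn_one \<longleftrightarrow> x = zzn_one"
    using 0 class_of_one class_of_eq[OF class_of_class[OF 0(1)] 0(2)] mem_class_of[OF 0(1)] by auto
  moreover have "prod_tuples n C 0 g = (if g = zzn_one then {[]} else {})" for g
    by (auto simp: prod_tuples_def)
  ultimately show ?case by simp
next
  case (Suc k)
  have "finite C" using C class_finite by blast
  show ?case
    unfolding card_prod_tuples_Suc[OF \<open>finite C\<close>]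
    by (rule convolution_class_invariant[OF C prod_tuples_support_carrier[OF n_pos] Suc.IH Suc.prems, symmetric])
qed

lemma S_subset_pow_prime_class:
  assumes C: "C \<in> \<D>" and p: "prime p" and inj: "inj_on (pow (int p)) C"
  shows "S_subset \<D> (pow (int p) ` C)"
  unfolding S_subset_iff
proof (intro conjI ballI subsetI)
  show "y \<in> G" if "y \<in> pow (int p) ` C" for y
    using that by (auto simp: zzn_pow_closed n_pos)
  fix y y' assume y: "y \<in> pow (int p) ` C" and y': "y' \<in> class_of y"
  have "finite C" using C class_finite by blast
  have "y \<in> G" using y by (auto simp: zzn_pow_closed n_pos)
  obtain c where "c \<in> C" "y = pow (int p) c" using y by blast
  then have fiber: "{c \<in> C. pow (int p) c = y} = {c}" using inj by (auto simp: inj_on_def)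
  have "card {c \<in> C. pow (int p) c = y'} mod p = card (prod_tuples n C p y') mod p"
    using card_prod_tuples_prime_mod[OF p \<open>finite C\<close>] by simp
  also have "\<dots> = card (prod_tuples n C p y) mod p"
    using card_prod_tuples_class_invariant[OF C \<open>y \<in> G\<close> y'] by simp
  also have "\<dots> = 1"
    using card_prod_tuples_prime_mod[OF p \<open>finite C\<close>] fiber prime_gt_1_nat[OF p] by simp
  finally have "{c \<in> C. pow (int p) c = y'} \<noteq> {}" by (intro notI) simp
  then show "y' \<in> pow (int p) ` C" by blast
qed

lemma S_subset_pow_prime:
  assumes X: "S_subset \<D> X" and p: "prime p" and inj: "inj_on (pow (int p)) X"
  shows "S_subset \<D> (pow (int p) ` X)"
proof -
  have "S_subset \<D> (\<Union>((\<lambda>C. pow (int p) ` C) ` {C \<in> \<D>. C \<subseteq> X}))"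
  proof (rule S_subset_Union)
    fix Y assume "Y \<in> (\<lambda>C. pow (int p) ` C) ` {C \<in> \<D>. C \<subseteq> X}"
    then obtain C where C: "C \<in> \<D>" "C \<subseteq> X" and Y: "Y = pow (int p) ` C" by blast
    show "S_subset \<D> Y" unfolding Y by (rule S_subset_pow_prime_class[OF C(1) p inj_on_subset[OF inj C(2)]])
  qed
  moreover have "pow (int p) ` X = \<Union>((\<lambda>C. pow (int p) ` C) ` {C \<in> \<D>. C \<subseteq> X})"
    using S_subset_eq_Union_classes[OF X] by blast
  ultimately show ?thesis by simp
qed

lemma S_subset_pow:
  assumes "0 < k" and "S_subset \<D> X" and "inj_on (pow (int k)) X"
  shows "S_subset \<D> (pow (int k) ` X)"
  using assms
proof (induction k arbitrary: X rule: less_induct)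
  case (less k)
  show ?case
  proof (cases "k = 1")
    case True
    have "pow 1 x = x" if "x \<in> X" for x
      using that S_subset_carrier[OF less.prems(2)] zzn_pow_1 by blast
    then have "pow 1 ` X = X" by (metis (no_types, lifting) image_cong image_ident)
    then show ?thesis using True less.prems(2) by simp
  next
    case False
    then obtain p k' where p: "prime p" and k: "k = p * k'" using prime_factor_nat by (metis dvdE)
    then have "0 < k'" "k' < k" using less.prems(1) prime_gt_1_nat[OF p] by auto
    have pow_k: "pow (int k) = pow (int p) \<circ> pow (int k')"
      by (simp add: k comp_def zzn_pow_pow fun_eq_iff)
    then have "S_subset \<D> (pow (int k') ` X)"
      using less.IH[OF \<open>k' < k\<close> \<open>0 < k'\<close> less.prems(2)] less.prems(3) inj_on_imageI2 by metis
    moreover have "inj_on (pow (int p)) (pow (int k') ` X)"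
      using less.prems(3) pow_k inj_on_imageI by metis
    ultimately have "S_subset \<D> (pow (int p) ` pow (int k') ` X)" by (rule S_subset_pow_prime[OF _ p])
    then show ?thesis by (simp only: pow_k image_comp)
  qed
qed

lemma S_subset_pow_coprime:
  assumes "0 < k" and "coprime k n" and "S_subset \<D> X"
  shows "S_subset \<D> (pow k ` X)"
proof -
  have "inj_on (pow (int (nat k))) X"
    using assms inj_on_subset[OF inj_on_zzn_pow S_subset_carrier] by simp
  then show ?thesis using S_subset_pow[of "nat k"] assms by simp
qed

lemma S_subset_pow_Zn_sub:
  assumes "0 < k" and "S_subset \<D> X" and "X \<subseteq> Zn_sub n"
  shows "S_subset \<D> (pow k ` X)"
proof -
  have "inj_on (pow (int (nat k))) X"
    using assms inj_on_zzn_pow_Zn_sub[of k n] inj_on_subset by simp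
  then show ?thesis using S_subset_pow[of "nat k"] assms by simp
qed

end

section \<open>Classes when Z^(n) is an S-subgroup\<close>

lemma dilation_shift_eq:
  fixes a b i N :: int
  assumes a: "2 * \<bar>a\<bar> < N" and i: "2 * \<bar>i\<bar> < N"
    and eq: "a = N * b - (N - 1) * i \<or> a = N * b + (N - 1) * i"
  shows "a = b"
proof -
  have small: "c = 0" if "\<bar>N * c\<bar> < N" for c :: int
  proof (rule ccontr)
    assume "c \<noteq> 0"
    have "N * 1 \<le> N * \<bar>c\<bar>" using \<open>c \<noteq> 0\<close> a by (intro mult_left_mono) auto
    then have "N \<le> N * \<bar>c\<bar>" by simp
    then show False using that a by (simp add: abs_mult)
  qed
  from eq show ?thesis
  proof
    assume "a = N * b - (N - 1) * i"
    then have "a - i = N * (b - i)" by (simp add: algebra_simps)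
    moreover have "\<bar>a - i\<bar> < N" using a i by simp
    ultimately show ?thesis using small[of "b - i"] by simp
  next
    assume "a = N * b + (N - 1) * i"
    then have "a + i = N * (b + i)" by (simp add: algebra_simps)
    moreover have "\<bar>a + i\<bar> < N" using a i by simp
    ultimately show ?thesis using small[of "b + i"] by simp
  qed
qed

lemma zzn_pow_mult_shift_cancel:
  assumes N: "[N = 1] (mod n)" and y': "y' \<in> zzn_carrier n"
    and small: "2 * \<bar>fst y\<bar> < N" "2 * \<bar>i\<bar> < N"
    and w: "w \<in> {(- ((N - 1) * i), 0), ((N - 1) * i, 0)}"
    and y: "y = zzn_mult n (zzn_pow n N y') w"
  shows "y = y'"
proof -
  have pow_y': "zzn_pow n N y' = (N * fst y', snd y')" by (rule zzn_pow_cong_1[OF N y'])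
  then have "snd y = snd y'" using y w y' by (auto simp: zzn_mult_def zzn_carrier_iff)
  moreover have "fst y = fst y'"
  proof (rule dilation_shift_eq[OF small])
    show "fst y = N * fst y' - (N - 1) * i \<or> fst y = N * fst y' + (N - 1) * i"
      using y w pow_y' by (auto simp: zzn_mult_def)
  qed
  ultimately show ?thesis by (simp add: prod_eq_iff)
qed

lemma cong_inverse_gt:
  fixes k n B :: int
  assumes "0 < n" and "coprime k n"
  obtains m where "B < m" and "[k * m = 1] (mod n)"
proof -
  obtain x where x: "[k * x = 1] (mod n)" using cong_solve_coprime_int[OF assms(2)] by blast
  define m where "m = x + n * (\<bar>x\<bar> + \<bar>B\<bar> + 1)"
  have "B < m"
  proof -
    have "\<bar>x\<bar> + \<bar>B\<bar> + 1 \<le> n * (\<bar>x\<bar> + \<bar>B\<bar> + 1)" using assms(1) by simp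
    then show ?thesis unfolding m_def by linarith
  qed
  moreover have "[k * m = k * x] (mod n)"
  proof -
    have "k * m = k * x + n * (k * (\<bar>x\<bar> + \<bar>B\<bar> + 1))" by (simp add: m_def algebra_simps)
    then show ?thesis by (simp add: cong_def)
  qed
  then have "[k * m = 1] (mod n)" using x by (rule cong_trans)
  ultimately show ?thesis by (rule that)
qed

locale zzn_schur_Zn = zzn_schur +
  assumes S_subset_Zn_sub: "S_subset \<D> (Zn_sub n)"
begin

abbreviation H where "H \<equiv> Zn_sub n"

lemma class_of_Zn_sub_subset: "h \<in> H \<Longrightarrow> class_of h \<subseteq> H"
  using S_subset_Zn_sub by (auto simp: S_subset_iff)

lemma Zn_sub_class_exponent_eq_1:
  assumes K: "K \<in> \<D>" "K \<subseteq> H" "K \<noteq> {zzn_one}" and K': "K' \<in> {K, set_inv n K}"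
    and u: "u \<in> K'" and s: "0 < s" and pow_u: "pow s u \<in> K"
  shows "s = 1"
proof -
  let ?weight = "\<lambda>A. \<Sum>y\<in>A. \<bar>fst y\<bar>"
  have KG: "K \<subseteq> G" using K(2) Zn_sub_carrier[OF n_pos] by blast
  have inj_inv: "inj_on (zzn_inv n) K" using inj_on_subset[OF inj_on_zzn_inv KG] .
  have inv_K: "card (set_inv n K) = card K" "?weight (set_inv n K) = ?weight K"
    unfolding set_inv_def card_image[OF inj_inv] sum.reindex[OF inj_inv]
    by (simp_all add: zzn_inv_def)
  have K'_D: "K' \<in> \<D>" and K'_H: "K' \<subseteq> H" and "card K' = card K" and "?weight K' = ?weight K"
    using K K' set_inv_class zzn_inv_Zn_sub inv_K by (auto simp: set_inv_def)
  have inj: "inj_on (pow s) K'" using inj_on_zzn_pow_Zn_sub[of s n] K'_H s inj_on_subset by simp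
  have "S_subset \<D> (pow s ` K')" using S_subset_pow_Zn_sub[OF s S_subset_class[OF K'_D] K'_H] .
  then have "K \<subseteq> pow s ` K'"
    using S_subsetD[of "pow s ` K'" "pow s u"] class_of_eq[OF K(1) pow_u] u by blast
  moreover have "card (pow s ` K') = card K"
    using card_image[OF inj] \<open>card K' = card K\<close> by simp
  ultimately have "K = pow s ` K'"
    using card_subset_eq class_finite[OF K'_D] by (metis finite_imageI)
  moreover have "?weight (pow s ` K') = s * ?weight K'"
    unfolding sum.reindex[OF inj] using s by (simp add: zzn_pow_def abs_mult sum_distrib_left)
  ultimately have "?weight K = s * ?weight K" using \<open>?weight K' = ?weight K\<close> by simp
  moreover have "0 < ?weight K"
  proof -
    obtain y where y: "y \<in> K" "y \<noteq> zzn_one"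
      using K(3) class_nonempty[OF K(1)] class_of_one class_of_eq[OF K(1)] by blast
    then have "fst y \<noteq> 0" using K(2) by (auto simp: Zn_sub_def zzn_one_def)
    then show ?thesis
      using y(1) class_finite[OF K(1)] by (intro sum_pos2[of _ y]) auto
  qed
  ultimately show "s = 1" by simp
qed

lemma class_of_Zn_generator: "class_of (n, 0) \<subseteq> {(n, 0), (- n, 0)}"
proof
  define K where "K = class_of (n, 0)"
  have gen: "(n, 0) \<in> H" "(- n, 0) \<in> H" unfolding Zn_sub_def by (auto intro: exI[of _ 1] exI[of _ "-1"])
  then have gen_G: "(n, 0) \<in> G" using Zn_sub_carrier[OF n_pos] by blast
  have K: "K \<in> \<D>" "(n, 0) \<in> K" "K \<subseteq> H"
    using class_of_class[OF gen_G] mem_class_of[OF gen_G] class_of_Zn_sub_subset[OF gen(1)]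
    by (simp_all add: K_def)
  have "K \<noteq> {zzn_one}" using K(2) n_pos by (auto simp: zzn_one_def)
  have inv: "class_of (- n, 0) = set_inv n K"
    using class_of_zzn_inv[OF gen_G] by (simp add: K_def zzn_inv_def)
  fix d assume "d \<in> class_of (n, 0)"
  then have d: "d \<in> K" unfolding K_def .
  then obtain t where t: "d = (n * t, 0)" using K(3) by (auto simp: Zn_sub_def)
  define u where "u = (if 0 < t then (n, 0) else (- n, 0 :: int))"
  have "u \<in> class_of u" "class_of u \<in> {K, set_inv n K}"
    using mem_class_of gen Zn_sub_carrier[OF n_pos] inv by (auto simp: u_def K_def)
  moreover have "t \<noteq> 0"
    using d t class_of_eq[OF K(1)] class_of_one \<open>K \<noteq> {zzn_one}\<close> by (auto simp: zzn_one_def)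
  then have "pow \<bar>t\<bar> u = d" by (auto simp: u_def t zzn_pow_def)
  ultimately have "\<bar>t\<bar> = 1"
    using Zn_sub_class_exponent_eq_1[OF K(1,3) \<open>K \<noteq> {zzn_one}\<close>, of "class_of u" u "\<bar>t\<bar>"] d \<open>t \<noteq> 0\<close>
    by simp
  then show "d \<in> {(n, 0), (- n, 0)}" using t by (auto simp: abs_if split: if_splits)
qed

lemma class_of_Zn_sub:
  assumes h: "h \<in> H" shows "class_of h \<subseteq> {h, zzn_inv n h}"
proof -
  obtain t where t: "h = (n * t, 0)" using h by (auto simp: Zn_sub_def)
  show ?thesis
  proof (cases "t = 0")
    case True
    then show ?thesis using t class_of_one by (simp add: zzn_one_def)
  next
    case False
    define u where "u = (if 0 < t then (n, 0) else (- n, 0 :: int))"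
    have u: "u \<in> H" "zzn_inv n u \<in> H" unfolding u_def Zn_sub_def zzn_inv_def
      by (auto intro: exI[of _ 1] exI[of _ "-1"])
    then have uG: "u \<in> G" using Zn_sub_carrier[OF n_pos] by blast
    have "class_of u \<subseteq> {u, zzn_inv n u}"
    proof (cases "0 < t")
      case True
      then show ?thesis using class_of_Zn_generator by (simp add: u_def zzn_inv_def)
    next
      case False
      have "class_of u = set_inv n (class_of (n, 0))"
        using False class_of_zzn_inv[of "(n, 0)"] Zn_sub_carrier[OF n_pos] u
        by (auto simp: u_def zzn_inv_def)
      then show ?thesis using class_of_Zn_generator False by (auto simp: u_def set_inv_def zzn_inv_def)
    qed
    moreover have "h = pow \<bar>t\<bar> u" using False by (auto simp: u_def t zzn_pow_def)
    moreover have "S_subset \<D> (pow \<bar>t\<bar> ` class_of u)"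
      using S_subset_pow_Zn_sub[OF _ S_subset_class[OF class_of_class[OF uG]] class_of_Zn_sub_subset[OF u(1)]] False
      by simp
    ultimately have "class_of h \<subseteq> pow \<bar>t\<bar> ` {u, zzn_inv n u}"
      using S_subsetD mem_class_of[OF uG] by blast
    also have "\<dots> = {h, zzn_inv n h}"
      using \<open>h = pow \<bar>t\<bar> u\<close> by (simp add: u_def zzn_pow_def zzn_inv_def)
    finally show ?thesis .
  qed
qed

lemma class_pow_cong_1_class:
  assumes C: "C \<in> \<D>" and N: "0 < N" "[N = 1] (mod n)"
    and small: "\<forall>y\<in>C. 2 * \<bar>fst y\<bar> < N"
  shows "pow N ` C \<in> \<D>"
proof -
  have CG: "C \<subseteq> G" using C class_subset_carrier by blast
  have "coprime N n" using cong_imp_coprime[OF cong_sym[OF N(2)]] by simp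
  then have pow_C: "S_subset \<D> (pow N ` C)" using S_subset_pow_coprime[OF N(1)] S_subset_class[OF C] by blast
  obtain x where x: "x \<in> C" using class_nonempty[OF C] by blast
  then have xG: "x \<in> G" using CG by blast
  define E where "E = class_of (pow N x)"
  have E: "E \<in> \<D>" "pow N x \<in> E" "E \<subseteq> pow N ` C"
    using class_of_class mem_class_of zzn_pow_closed[OF n_pos] pow_C x
    by (auto simp: E_def S_subset_iff)
  define i where "i = fst x"
  define h where "h = (- ((N - 1) * i), 0 :: int)"
  have "h \<in> H"
  proof -
    obtain q where "N - 1 = n * q" using N(2) by (metis cong_iff_dvd_diff dvdE)
    then show ?thesis by (auto simp: h_def Zn_sub_def intro: exI[of _ "- (q * i)"])
  qed
  then have hG: "h \<in> G" using Zn_sub_carrier[OF n_pos] by blast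
  have "x = pow N x \<cdot> h"
    using zzn_pow_cong_1[OF N(2) xG] xG by (cases x) (simp add: h_def i_def zzn_mult_def zzn_carrier_iff algebra_simps)
  then have "x \<in> set_mult E (class_of h)"
    unfolding set_mult_def using E(2) mem_class_of[OF hG] by (intro CollectI exI[of _ "pow N x"] exI[of _ h]) simp
  then have C_sub: "C \<subseteq> set_mult E (class_of h)"
    using S_subset_set_mult[OF E(1) class_of_class[OF hG]] class_of_eq[OF C x] by (auto simp: S_subset_iff)
  have "pow N ` C \<subseteq> E"
  proof
    fix z assume "z \<in> pow N ` C"
    then obtain y where y: "y \<in> C" and z: "z = pow N y" by blast
    from y C_sub obtain e w where e: "e \<in> E" and w: "w \<in> class_of h" and ye: "y = e \<cdot> w"
      by (auto simp: set_mult_def)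
    from e E(3) obtain y' where y': "y' \<in> C" and ey': "e = pow N y'" by blast
    have "w \<in> {(- ((N - 1) * i), 0), ((N - 1) * i, 0)}"
      using class_of_Zn_sub[OF \<open>h \<in> H\<close>] w by (auto simp: h_def zzn_inv_def)
    then have "y = y'"
      using zzn_pow_mult_shift_cancel[OF N(2) _ _ _ _ ye[unfolded ey']] small y x y' CG
      by (auto simp: i_def)
    then show "z \<in> E" using z ey' e by simp
  qed
  then have "pow N ` C = E" using E(3) by blast
  then show ?thesis using E(1) by simp
qed

lemma class_pow_class:
  assumes C: "C \<in> \<D>" and k: "0 < k" "coprime k n"
  shows "pow k ` C \<in> \<D>"
proof -
  define M where "M = Max ((\<lambda>y. \<bar>fst y\<bar>) ` C)"
  have M: "\<bar>fst y\<bar> \<le> M" if "y \<in> C" for y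
    using that class_finite[OF C] by (simp add: M_def)
  obtain m where m: "2 * M < m" "[k * m = 1] (mod n)" using cong_inverse_gt[OF n_pos k(2)] by blast
  have "0 < m" using m(1) M class_nonempty[OF C] by force
  have "m \<le> k * m" using k(1) \<open>0 < m\<close> by simp
  then have "\<forall>y\<in>C. 2 * \<bar>fst y\<bar> < k * m" using M m(1) by fastforce
  then have "pow (k * m) ` C \<in> \<D>"
    using class_pow_cong_1_class[OF C _ m(2)] \<open>0 < m\<close> k(1) by simp
  have "coprime m n" using m(2) by (metis cong_imp_coprime cong_sym coprime_1_left coprime_mult_left_iff)
  define Y where "Y = pow k ` C"
  have Y: "S_subset \<D> Y" unfolding Y_def using S_subset_pow_coprime[OF k S_subset_class[OF C]] .
  obtain c where "c \<in> C" using class_nonempty[OF C] by blast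
  define y where "y = pow k c"
  have "y \<in> Y" using \<open>c \<in> C\<close> by (simp add: Y_def y_def)
  then have yG: "y \<in> G" using S_subset_carrier[OF Y] by blast
  define E where "E = class_of y"
  have E: "E \<in> \<D>" "E \<subseteq> Y" "E \<noteq> {}"
    using class_of_class[OF yG] S_subsetD[OF Y \<open>y \<in> Y\<close>] class_nonempty by (auto simp: E_def)
  have pow_Y: "pow m ` Y = pow (k * m) ` C"
    by (simp add: Y_def image_image zzn_pow_pow mult.commute)
  have "pow m ` E = pow (k * m) ` C"
    using S_subset_subset_class_eq[OF S_subset_pow_coprime[OF \<open>0 < m\<close> \<open>coprime m n\<close> S_subset_class[OF E(1)]]]
      \<open>pow (k * m) ` C \<in> \<D>\<close> E pow_Y by blast
  then have "pow m ` E = pow m ` Y" using pow_Y by simp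
  moreover have "inj_on (pow m) G" using inj_on_zzn_pow \<open>0 < m\<close> \<open>coprime m n\<close> by simp
  ultimately have "E = Y"
    using inj_on_image_eq_iff[of "pow m" G] E(2) S_subset_carrier[OF Y] by blast
  then show ?thesis using E(1) by (simp add: Y_def)
qed

lemma class_pow_coprime_class:
  assumes C: "C \<in> \<D>" and k: "coprime k n"
  shows "pow k ` C \<in> \<D>"
proof (cases k "0 :: int" rule: linorder_cases)
  case less
  then have "set_inv n (pow (- k) ` C) \<in> \<D>"
    using class_pow_class[OF C] set_inv_class k by simp
  then show ?thesis by (simp add: set_inv_def image_image zzn_pow_uminus[of n "- k", simplified])
next
  case equal
  then have "n = 1" using k n_pos by simp
  then have "pow k ` C = {zzn_one}"
    using equal class_nonempty[OF C] by (auto simp: zzn_pow_def zzn_one_def)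
  then show ?thesis using one_class by simp
next
  case greater
  then show ?thesis using class_pow_class[OF C _ k] by simp
qed

end

theorem theorem3p1:
  fixes n :: int and \<D> :: "(int \<times> int) set set" and C :: "(int \<times> int) set"
  assumes "n > 0"
    and "schur_partition TYPE('f::field_char_0) n \<D>"
    and "S_subset \<D> (Zn_sub n)"
    and "S_subset \<D> C"
  shows "C \<in> \<D> \<longleftrightarrow> (\<forall>k::int. gcd k n = 1 \<longrightarrow> set_pow n k C \<in> \<D>)"
proof -
  interpret zzn_schur_Zn n \<D>
    using schur_partition_imp_zzn_schur[OF assms(1,2)] assms(3)
    by (simp add: zzn_schur_Zn_def zzn_schur_Zn_axioms_def)
  have "set_pow n 1 C = C"
    using S_subset_carrier[OF assms(4)] zzn_pow_1 by (force simp: set_pow_def)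
  show ?thesis
  proof
    show "\<forall>k. gcd k n = 1 \<longrightarrow> set_pow n k C \<in> \<D>" if "C \<in> \<D>"
      using class_pow_coprime_class[OF that] by (simp add: set_pow_def coprime_iff_gcd_eq_1)
    show "C \<in> \<D>" if "\<forall>k. gcd k n = 1 \<longrightarrow> set_pow n k C \<in> \<D>"
      using that[rule_format, of 1] \<open>set_pow n 1 C = C\<close> by simp
  qed
qed

end
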